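(* Let $(X,\|\cdot\|)$ be a normed linear space over $\mathbb{R}$ or $\mathbb{C}$. Then for all $x,a\in X$, $$\langle x,a\rangle_i\ \ge\ \tfrac12\left(\|a\|^2-\|x-a\|^2\right).$$ Moreover, if $X\neq\{0\}$, the constant $\tfrac12$ cannot be replaced by a larger quantity on the set of pairs with $\|a\|>\|x-a\|$: there is no constant $C>\tfrac12$ such that $\langle x,a\rangle_i\ge C\left(\|a\|^2-\|x-a\|^2\right)$ for all $x,a\in X$ with $\|a\|>\|x-a\|$.
   Context: For a normed linear space $(X,\|\cdot\|)$, the inferior semi-inner product is defined for $x,y\in X$ by $\langle x,y\rangle_i:=\lim_{t\to 0^-}\frac{\|y+tx\|^2-\|y\|^2}{2t}$ (the limit exists by convexity of $t\mapsto\frac12\|y+tx\|^2$). *)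

theory Defs
  imports "HOL-Analysis.Analysis"
begin

text \<open>Inferior semi-inner product of a real (or complex, viewed as real) normed space:
  sip_i x y = lim_{t -> 0-} (norm (y + t x)^2 - norm y^2) / (2 t).\<close>
definition sip_i :: "'a::real_normed_vector \<Rightarrow> 'a \<Rightarrow> real" where
  "sip_i x y = Lim (at_left 0) (\<lambda>t::real. (norm (y + t *\<^sub>R x) ^ 2 - norm y ^ 2) / (2 * t))"

end

theory Submission
  imports Defs
begin

text \<open>For fixed \<open>a\<close> and \<open>x\<close> the function \<open>t \<mapsto> \<parallel>a + t x\<parallel>\<^sup>2\<close> is convex, so its
  difference quotients at \<open>0\<close> increase with \<open>t\<close>; the left limit defining \<open>\<langle>x, a\<rangle>\<^sub>i\<close> is
  therefore the supremum of the quotients over \<open>t < 0\<close>, and the quotient at \<open>t = -1\<close> is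
  exactly \<open>(\<parallel>a\<parallel>\<^sup>2 - \<parallel>x - a\<parallel>\<^sup>2) / 2\<close>. For sharpness take \<open>a = v \<noteq> 0\<close> and \<open>x = e v\<close> with
  \<open>0 < e < 1\<close>: then \<open>\<langle>x, a\<rangle>\<^sub>i = e \<parallel>v\<parallel>\<^sup>2\<close> and \<open>\<parallel>a\<parallel>\<^sup>2 - \<parallel>x - a\<parallel>\<^sup>2 = e (2 - e) \<parallel>v\<parallel>\<^sup>2\<close>, so the
  best constant on these pairs is \<open>1 / (2 - e)\<close>, which tends to \<open>1/2\<close> as \<open>e \<rightarrow> 0\<close>.\<close>

lemma convex_on_norm_add_scaleR:
  fixes a x :: "'a::real_normed_vector"
  shows "convex_on UNIV (\<lambda>t::real. norm (a + t *\<^sub>R x))"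
proof (rule convex_onI)
  fix u s t :: real assume "0 < u" "u < 1"
  have "a + ((1 - u) * s + u * t) *\<^sub>R x = (1 - u) *\<^sub>R (a + s *\<^sub>R x) + u *\<^sub>R (a + t *\<^sub>R x)"
    by (simp add: algebra_simps)
  then show "norm (a + ((1 - u) *\<^sub>R s + u *\<^sub>R t) *\<^sub>R x)
      \<le> (1 - u) * norm (a + s *\<^sub>R x) + u * norm (a + t *\<^sub>R x)"
    using norm_triangle_ineq[of "(1 - u) *\<^sub>R (a + s *\<^sub>R x)" "u *\<^sub>R (a + t *\<^sub>R x)"] \<open>0 < u\<close> \<open>u < 1\<close>
    by simp
qed simp

lemma convex_on_power2:
  fixes f :: "'a::real_vector \<Rightarrow> real"
  assumes "convex_on S f" and "\<And>x. x \<in> S \<Longrightarrow> 0 \<le> f x"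
  shows "convex_on S (\<lambda>x. f x ^ 2)"
proof (rule convex_onI)
  show "convex S" using assms(1) by (rule convex_on_imp_convex)
next
  fix u :: real and x y assume u: "0 < u" "u < 1" and xy: "x \<in> S" "y \<in> S"
  have "(1 - u) *\<^sub>R x + u *\<^sub>R y \<in> S"
    using convexD[OF convex_on_imp_convex[OF assms(1)]] u xy by simp
  moreover have "f ((1 - u) *\<^sub>R x + u *\<^sub>R y) \<le> (1 - u) * f x + u * f y"
    using convex_onD[OF assms(1), of u x y] u xy by simp
  ultimately have "f ((1 - u) *\<^sub>R x + u *\<^sub>R y) ^ 2 \<le> ((1 - u) * f x + u * f y) ^ 2"
    by (intro power_mono assms(2))
  also have "\<dots> = (1 - u) * f x ^ 2 + u * f y ^ 2 - u * (1 - u) * (f x - f y) ^ 2"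
    by (simp add: power2_eq_square algebra_simps)
  also have "\<dots> \<le> (1 - u) * f x ^ 2 + u * f y ^ 2"
    using u by simp
  finally show "f ((1 - u) *\<^sub>R x + u *\<^sub>R y) ^ 2 \<le> (1 - u) * f x ^ 2 + u * f y ^ 2" .
qed

lemma mono_on_tendsto_at_left_SUP:
  fixes g :: "real \<Rightarrow> real"
  assumes mono: "mono_on {..<c} g" and bdd: "bdd_above (g ` {..<c})"
  shows "(g \<longlongrightarrow> (SUP t\<in>{..<c}. g t)) (at_left c)"
proof (rule order_tendstoI)
  fix y assume "y < (SUP t\<in>{..<c}. g t)"
  then obtain t0 where t0: "t0 < c" "y < g t0"
    by (subst (asm) less_cSUP_iff[OF _ bdd]) auto
  have "eventually (\<lambda>t. t \<in> {t0<..<c}) (at_left c)"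
    using t0 by (intro eventually_at_left_real) auto
  then show "eventually (\<lambda>t. y < g t) (at_left c)"
    by (rule eventually_mono) (use t0 mono_onD[OF mono, of t0] in force)
next
  fix y assume "(SUP t\<in>{..<c}. g t) < y"
  then have "g t < y" if "t < c" for t
    using cSUP_upper[OF _ bdd, of t] that by simp
  moreover have "eventually (\<lambda>t. t < c) (at_left c)"
    by (simp add: eventually_at_filter)
  ultimately show "eventually (\<lambda>t. g t < y) (at_left c)"
    by (auto elim: eventually_mono)
qed

lemma sip_i_ge_difference_quotient:
  fixes a x :: "'a::real_normed_vector"
  assumes "t < 0"
  shows "(norm (a + t *\<^sub>R x) ^ 2 - norm a ^ 2) / (2 * t) \<le> sip_i x a"
proof -
  define f where "f s = norm (a + s *\<^sub>R x) ^ 2" for s :: real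
  define q where "q s = (norm (a + s *\<^sub>R x) ^ 2 - norm a ^ 2) / (2 * s)" for s :: real
  have q_slope: "q s = (f s - f 0) / (s - 0) / 2" for s
    by (simp add: q_def f_def)
  have f: "convex_on UNIV f"
    unfolding f_def by (intro convex_on_power2 convex_on_norm_add_scaleR) simp
  have "q s \<le> q s'" if "s < s'" "s' < 0" for s s'
    unfolding q_slope using convex_on_slope_le(2)[OF f _ _ that] by (intro divide_right_mono) simp_all
  then have mono: "mono_on {..<0} q"
    by (intro mono_onI) (auto simp: order_le_less)
  have "q s \<le> (f 1 - f 0) / 2" if "s < 0" for s
  proof -
    have "(f s - f 0) / (s - 0) \<le> f 1 - f 0"
      using convex_on_slope_le[OF f _ _ that, of 1] by simp
    then show ?thesis
      unfolding q_slope by (intro divide_right_mono) simp_all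
  qed
  then have bdd: "bdd_above (q ` {..<0})"
    by (intro bdd_aboveI2[of _ _ "(f 1 - f 0) / 2"]) auto
  have "sip_i x a = (SUP s\<in>{..<0}. q s)"
    unfolding sip_i_def q_def[symmetric]
    by (intro tendsto_Lim mono_on_tendsto_at_left_SUP mono bdd) (simp add: trivial_limit_at_left_real)
  then show ?thesis
    using cSUP_upper[OF _ bdd, of t] assms by (simp add: q_def)
qed

lemma sip_i_ge_half_norm_diff:
  fixes a x :: "'a::real_normed_vector"
  shows "1/2 * (norm a ^ 2 - norm (x - a) ^ 2) \<le> sip_i x a"
  using sip_i_ge_difference_quotient[of "-1" a x]
  by (simp add: norm_minus_commute field_simps)

lemma sip_i_scaleR_self:
  fixes v :: "'a::real_normed_vector"
  shows "sip_i (e *\<^sub>R v) v = e * norm v ^ 2"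
proof -
  have "norm v ^ 2 * (e + t * e ^ 2 / 2) = (norm (v + t *\<^sub>R (e *\<^sub>R v)) ^ 2 - norm v ^ 2) / (2 * t)"
    if "t \<noteq> 0" for t :: real
  proof -
    have "v + t *\<^sub>R (e *\<^sub>R v) = (1 + t * e) *\<^sub>R v"
      by (simp add: algebra_simps)
    then have "norm (v + t *\<^sub>R (e *\<^sub>R v)) ^ 2 = (1 + t * e) ^ 2 * norm v ^ 2"
      by (simp add: power_mult_distrib)
    moreover have "n * (e + t * e ^ 2 / 2) = ((1 + t * e) ^ 2 * n - n) / (2 * t)" for n :: real
      using that by (simp add: field_simps power2_eq_square)
    ultimately show ?thesis
      by simp
  qed
  then have "\<forall>\<^sub>F t in at_left (0::real). norm v ^ 2 * (e + t * e ^ 2 / 2)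
      = (norm (v + t *\<^sub>R (e *\<^sub>R v)) ^ 2 - norm v ^ 2) / (2 * t)"
    by (auto simp: eventually_at_filter)
  moreover have "((\<lambda>t. norm v ^ 2 * (e + t * e ^ 2 / 2)) \<longlongrightarrow> norm v ^ 2 * (e + 0 * e ^ 2 / 2)) (at_left 0)"
    by (intro tendsto_intros) simp
  ultimately have "((\<lambda>t. (norm (v + t *\<^sub>R (e *\<^sub>R v)) ^ 2 - norm v ^ 2) / (2 * t))
      \<longlongrightarrow> e * norm v ^ 2) (at_left 0)"
    by (simp add: Lim_transform_eventually mult.commute)
  then show ?thesis
    unfolding sip_i_def by (intro tendsto_Lim) (simp_all add: trivial_limit_at_left_real)
qed

lemma sip_i_half_norm_diff_bound_sharp:
  fixes v :: "'a::real_normed_vector"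
  assumes "v \<noteq> 0" and "C > 1/2"
  shows "\<exists>x a :: 'a. norm (x - a) < norm a \<and> sip_i x a < C * (norm a ^ 2 - norm (x - a) ^ 2)"
proof -
  \<comment> \<open>chosen so that \<open>C (2 - e) = C + 1/2 > 1\<close>\<close>
  define e where "e = 1 - 1 / (2 * C)"
  have e: "0 < e" "e < 1" and "1 < C * (2 - e)"
    using assms(2) by (auto simp: e_def field_simps)
  have v: "0 < norm v ^ 2"
    using assms(1) by simp
  have dist: "norm (e *\<^sub>R v - v) = (1 - e) * norm v"
    using norm_scaleR[of "e - 1" v] e by (simp add: algebra_simps norm_minus_commute)
  have "sip_i (e *\<^sub>R v) v = e * norm v ^ 2"
    by (rule sip_i_scaleR_self)
  also have "\<dots> < (C * (2 - e)) * e * norm v ^ 2"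
    using \<open>1 < C * (2 - e)\<close> e v by simp
  also have "\<dots> = C * (norm v ^ 2 - norm (e *\<^sub>R v - v) ^ 2)"
    unfolding dist by (simp add: power2_eq_square algebra_simps)
  finally show ?thesis
    using dist e assms(1) by (intro exI[of _ "e *\<^sub>R v"] exI[of _ v]) simp
qed

theorem lemma2p1:
  shows "(\<forall>x a :: 'a. sip_i x a \<ge> 1/2 * (norm a ^ 2 - norm (x - a) ^ 2))
    \<and> ((\<exists>v::'a::real_normed_vector. v \<noteq> 0) \<longrightarrow>
        \<not> (\<exists>C::real. C > 1/2 \<and>
              (\<forall>x a :: 'a. norm a > norm (x - a) \<longrightarrow>
                   sip_i x a \<ge> C * (norm a ^ 2 - norm (x - a) ^ 2))))"
proof (intro conjI impI allI notI)
  fix x a :: 'a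
  show "sip_i x a \<ge> 1/2 * (norm a ^ 2 - norm (x - a) ^ 2)"
    by (rule sip_i_ge_half_norm_diff)
next
  assume "\<exists>v::'a. v \<noteq> 0" and "\<exists>C::real. C > 1/2 \<and>
    (\<forall>x a :: 'a. norm a > norm (x - a) \<longrightarrow> sip_i x a \<ge> C * (norm a ^ 2 - norm (x - a) ^ 2))"
  then obtain v :: 'a and C where "v \<noteq> 0" "C > 1/2" and bound:
    "\<And>x a :: 'a. norm a > norm (x - a) \<Longrightarrow> sip_i x a \<ge> C * (norm a ^ 2 - norm (x - a) ^ 2)"
    by blast
  then obtain x a :: 'a where lt: "norm (x - a) < norm a"
    and below: "sip_i x a < C * (norm a ^ 2 - norm (x - a) ^ 2)"
    using sip_i_half_norm_diff_bound_sharp by blast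
  from bound[OF lt] below show False
    by linarith
qed

end
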